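(* Let $k$ be an algebraically closed field of characteristic $2$, $f = x^2+y^2z+yz^2$, $m \geq 5$, $R_m = k[x_0,\dots,x_m,y_0,\dots,y_m,z_0,\dots,z_m]$, and $(\mathbb{A}^3)_m = \mathrm{Spec}\, R_m$. Define $f^{(j)}\in R_m$ ($0\le j\le m$) by $f(\sum_{i=0}^m x_it^i,\sum_{i=0}^m y_it^i,\sum_{i=0}^m z_it^i) = \sum_{j=0}^m f^{(j)}t^j$ in $R_m[t]/\langle t^{m+1}\rangle$. Define the ideals $I_m^0 = \langle x_0,x_1,x_2,y_0,y_1,z_0,z_1\rangle + \langle f^{(0)},\dots,f^{(m)}\rangle$, $I_m^1 = J_m^1 (R_m)_{z_1}\cap R_m$, $I_m^2 = J_m^2 (R_m)_{y_1}\cap R_m$, $I_m^3 = J_m^3 (R_m)_{y_1}\cap R_m$, where $J_m^1 = \langle x_0,x_1,y_0,y_1,z_0\rangle + \langle f^{(0)},\dots,f^{(m)}\rangle$, $J_m^2 = \langle x_0,x_1,y_0,z_0,z_1\rangle + \langle f^{(0)},\dots,f^{(m)}\rangle$, $J_m^3 = \langle x_0,x_1,y_0,z_0,y_1+z_1\rangle + \langle f^{(0)},\dots,f^{(m)}\rangle$, and let $Z_m^i = \mathbf{V}(I_m^i)\subseteq (\mathbb{A}^3)_m$ for $i=0,1,2,3$. Let $\psi_1,\psi_2$ be the automorphisms of $(\mathbb{A}^3)_m$ corresponding to the $k$-algebra automorphisms $\varphi_1,\varphi_2$ of $R_m$ given by $\varphi_1: x_i\mapsto x_i,\ y_i\mapsto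 z_i,\ z_i\mapsto y_i$ and $\varphi_2: x_i\mapsto x_i,\ y_i\mapsto y_i,\ z_i\mapsto y_i+z_i$ (for all $i$). Then (1) $\psi_1(Z_m^0)=Z_m^0$, $\psi_1(Z_m^1)=Z_m^2$, $\psi_1(Z_m^2)=Z_m^1$, $\psi_1(Z_m^3)=Z_m^3$; (2) $\psi_2(Z_m^0)=Z_m^0$, $\psi_2(Z_m^1)=Z_m^1$, $\psi_2(Z_m^2)=Z_m^3$, $\psi_2(Z_m^3)=Z_m^2$.
   Context: $(R_m)_h$ is the localization of $R_m$ at powers of $h$, and $J\cdot(R_m)_h\cap R_m$ denotes the preimage in $R_m$ of the extended ideal. $\mathbf{V}(I)$ is the zero set of the ideal $I$ in $(\mathbb{A}^3)_m$. *)

theory Defs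
  imports "HOL-Library.Poly_Mapping" "HOL-Computational_Algebra.Polynomial"
begin

datatype var = X nat | Y nat | Z nat

fun vidx :: "var \<Rightarrow> nat" where
  "vidx (X i) = i" | "vidx (Y i) = i" | "vidx (Z i) = i"

type_synonym 'k mpoly = "(var \<Rightarrow>\<^sub>0 nat) \<Rightarrow>\<^sub>0 'k"

definition Var :: "var \<Rightarrow> 'k::comm_ring_1 mpoly" where
  "Var v = Poly_Mapping.single (Poly_Mapping.single v 1) 1"

definition Const :: "'k::comm_ring_1 \<Rightarrow> 'k mpoly" where
  "Const c = Poly_Mapping.single 0 c"

definition Rm :: "nat \<Rightarrow> 'k::comm_ring_1 mpoly set" where
  "Rm m = {p. \<forall>mon \<in> Poly_Mapping.keys p. \<forall>v \<in> Poly_Mapping.keys mon. vidx v \<le> m}"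

definition fpoly :: "'a::comm_ring_1 \<Rightarrow> 'a \<Rightarrow> 'a \<Rightarrow> 'a" where
  "fpoly x y z = x^2 + y^2 * z + y * z^2"

definition arc :: "(nat \<Rightarrow> var) \<Rightarrow> nat \<Rightarrow> 'k::comm_ring_1 mpoly poly" where
  "arc c m = (\<Sum>i\<le>m. monom (Var (c i)) i)"

text \<open>f^(j) = coefficient of t^j of f(x(t),y(t),z(t)); for j \<le> m this is the
  coefficient in R_m[t]/(t^(m+1)).\<close>
definition fj :: "nat \<Rightarrow> nat \<Rightarrow> 'k::comm_ring_1 mpoly" where
  "fj m j = coeff (fpoly (arc X m) (arc Y m) (arc Z m)) j"

definition Fm :: "nat \<Rightarrow> 'k::comm_ring_1 mpoly set" where
  "Fm m = fj m ` {0..m}"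

definition gen_ideal :: "'a::comm_ring_1 set \<Rightarrow> 'a set \<Rightarrow> 'a set" where
  "gen_ideal S G = {p. \<exists>F r. finite F \<and> F \<subseteq> G \<and> (\<forall>g\<in>F. r g \<in> S) \<and>
                         p = (\<Sum>g\<in>F. r g * g)}"

text \<open>J (S)_h \<inter> S: preimage in S (a domain) of the extension of J to S
  localized at powers of h.\<close>
definition sat :: "'a::comm_ring_1 set \<Rightarrow> 'a set \<Rightarrow> 'a \<Rightarrow> 'a set" where
  "sat S J h = {p \<in> S. \<exists>n::nat. h ^ n * p \<in> J}"

definition is_prime_ideal :: "'a::comm_ring_1 set \<Rightarrow> 'a set \<Rightarrow> bool" where
  "is_prime_ideal S P \<longleftrightarrow> P \<subseteq> S \<and> 0 \<in> P \<and>
     (\<forall>a\<in>P. \<forall>b\<in>P. a + b \<in> P) \<and> (\<forall>a\<in>P. \<forall>r\<in>S. r * a \<in> P) \<and>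
     1 \<notin> P \<and> (\<forall>a\<in>S. \<forall>b\<in>S. a * b \<in> P \<longrightarrow> a \<in> P \<or> b \<in> P)"

definition Spec :: "'a::comm_ring_1 set \<Rightarrow> 'a set set" where
  "Spec S = {P. is_prime_ideal S P}"

definition zero_set :: "'a::comm_ring_1 set \<Rightarrow> 'a set \<Rightarrow> 'a set set" where
  "zero_set S I = {P \<in> Spec S. I \<subseteq> P}"

definition spec_map :: "'a::comm_ring_1 set \<Rightarrow> ('a \<Rightarrow> 'a) \<Rightarrow> 'a set \<Rightarrow> 'a set" where
  "spec_map S \<phi> P = {p \<in> S. \<phi> p \<in> P}"

definition subst :: "(var \<Rightarrow> 'k::comm_ring_1 mpoly) \<Rightarrow> 'k mpoly \<Rightarrow> 'k mpoly" where
  "subst \<sigma> p = (\<Sum>mon\<in>Poly_Mapping.keys p. Const (Poly_Mapping.lookup p mon) *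
                    (\<Prod>v\<in>Poly_Mapping.keys mon. \<sigma> v ^ Poly_Mapping.lookup mon v))"

fun \<sigma>1 :: "var \<Rightarrow> 'k::comm_ring_1 mpoly" where
  "\<sigma>1 (X i) = Var (X i)" | "\<sigma>1 (Y i) = Var (Z i)" | "\<sigma>1 (Z i) = Var (Y i)"

fun \<sigma>2 :: "var \<Rightarrow> 'k::comm_ring_1 mpoly" where
  "\<sigma>2 (X i) = Var (X i)" | "\<sigma>2 (Y i) = Var (Y i)" | "\<sigma>2 (Z i) = Var (Y i) + Var (Z i)"

definition \<phi>1 :: "'k::comm_ring_1 mpoly \<Rightarrow> 'k mpoly" where "\<phi>1 = subst \<sigma>1"
definition \<phi>2 :: "'k::comm_ring_1 mpoly \<Rightarrow> 'k mpoly" where "\<phi>2 = subst \<sigma>2"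

definition \<psi>1 :: "nat \<Rightarrow> 'k::comm_ring_1 mpoly set \<Rightarrow> 'k mpoly set" where
  "\<psi>1 m = spec_map (Rm m) \<phi>1"
definition \<psi>2 :: "nat \<Rightarrow> 'k::comm_ring_1 mpoly set \<Rightarrow> 'k mpoly set" where
  "\<psi>2 m = spec_map (Rm m) \<phi>2"

definition Im0 :: "nat \<Rightarrow> 'k::comm_ring_1 mpoly set" where
  "Im0 m = gen_ideal (Rm m) ({Var (X 0), Var (X 1), Var (X 2), Var (Y 0), Var (Y 1),
                              Var (Z 0), Var (Z 1)} \<union> Fm m)"

definition Jm1 :: "nat \<Rightarrow> 'k::comm_ring_1 mpoly set" where
  "Jm1 m = gen_ideal (Rm m) ({Var (X 0), Var (X 1), Var (Y 0), Var (Y 1), Var (Z 0)} \<union> Fm m)"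
definition Jm2 :: "nat \<Rightarrow> 'k::comm_ring_1 mpoly set" where
  "Jm2 m = gen_ideal (Rm m) ({Var (X 0), Var (X 1), Var (Y 0), Var (Z 0), Var (Z 1)} \<union> Fm m)"
definition Jm3 :: "nat \<Rightarrow> 'k::comm_ring_1 mpoly set" where
  "Jm3 m = gen_ideal (Rm m) ({Var (X 0), Var (X 1), Var (Y 0), Var (Z 0),
                              Var (Y 1) + Var (Z 1)} \<union> Fm m)"

definition Im1 :: "nat \<Rightarrow> 'k::comm_ring_1 mpoly set" where
  "Im1 m = sat (Rm m) (Jm1 m) (Var (Z 1))"
definition Im2 :: "nat \<Rightarrow> 'k::comm_ring_1 mpoly set" where
  "Im2 m = sat (Rm m) (Jm2 m) (Var (Y 1))"
definition Im3 :: "nat \<Rightarrow> 'k::comm_ring_1 mpoly set" where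
  "Im3 m = sat (Rm m) (Jm3 m) (Var (Y 1))"

definition Zm :: "nat \<Rightarrow> nat \<Rightarrow> 'k::comm_ring_1 mpoly set set" where
  "Zm m i = zero_set (Rm m) (if i = 0 then Im0 m else if i = 1 then Im1 m
                              else if i = 2 then Im2 m else Im3 m)"

end

theory Submission
  imports Defs
begin

(* In characteristic 2, \<phi>1 and \<phi>2 are involutive ring endomorphisms of R_m fixing every f^(j),
   because f is symmetric in y and z and f(x, y, y + z) = f(x, y, z) + 2 (y^3 + y^2 z). Hence they permute the generators of I^0 and of the J^i up to sums of generators,
   and carry a saturation J (R_m)_h \<inter> R_m into the saturation of the image ideal at the image of h.
   The images of the localizing elements are the required ones up to congruence modulo that ideal:
   \<phi>1(y_1) = z_1 \<equiv> -y_1 modulo J^3, and \<phi>2(z_1) = y_1 + z_1 \<equiv> z_1 modulo J^1. Finally, an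
   involution mapping A into B and B into A induces a bijection from V(A) onto V(B). *)

definition is_ring_hom :: "('a::comm_ring_1 \<Rightarrow> 'b::comm_ring_1) \<Rightarrow> bool" where
  "is_ring_hom f \<longleftrightarrow> f 0 = 0 \<and> f 1 = 1 \<and> (\<forall>a b. f (a + b) = f a + f b) \<and> (\<forall>a b. f (a * b) = f a * f b)"

lemma ring_hom_0: "is_ring_hom f \<Longrightarrow> f 0 = 0"
  and ring_hom_1: "is_ring_hom f \<Longrightarrow> f 1 = 1"
  and ring_hom_add: "is_ring_hom f \<Longrightarrow> f (a + b) = f a + f b"
  and ring_hom_mult: "is_ring_hom f \<Longrightarrow> f (a * b) = f a * f b"
  by (simp_all add: is_ring_hom_def)

lemma ring_hom_sum: "is_ring_hom f \<Longrightarrow> f (sum g A) = (\<Sum>x\<in>A. f (g x))"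
  by (induct A rule: infinite_finite_induct) (auto simp: ring_hom_0 ring_hom_add)

lemma ring_hom_prod: "is_ring_hom f \<Longrightarrow> f (prod g A) = (\<Prod>x\<in>A. f (g x))"
  by (induct A rule: infinite_finite_induct) (auto simp: ring_hom_1 ring_hom_mult)

lemma ring_hom_power: "is_ring_hom f \<Longrightarrow> f (a ^ n) = f a ^ n"
  by (induct n) (auto simp: ring_hom_1 ring_hom_mult)

lemma ring_hom_map_poly:
  assumes "is_ring_hom f"
  shows "is_ring_hom (map_poly f)"
proof -
  have "map_poly f (p + q) = map_poly f p + map_poly f q" for p q
    by (rule poly_eqI) (simp add: coeff_map_poly assms ring_hom_0 ring_hom_add)
  moreover have "map_poly f (p * q) = map_poly f p * map_poly f q" for p q
    by (rule poly_eqI)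
      (simp add: coeff_map_poly coeff_mult assms ring_hom_0 ring_hom_sum ring_hom_mult)
  ultimately show ?thesis
    using assms by (simp add: is_ring_hom_def ring_hom_1)
qed

definition is_subring :: "'a::comm_ring_1 set \<Rightarrow> bool" where
  "is_subring S \<longleftrightarrow> 0 \<in> S \<and> 1 \<in> S \<and> (\<forall>a\<in>S. \<forall>b\<in>S. a + b \<in> S \<and> a * b \<in> S \<and> - a \<in> S)"

lemma subring_0: "is_subring S \<Longrightarrow> 0 \<in> S"
  and subring_1: "is_subring S \<Longrightarrow> 1 \<in> S"
  and subring_add: "is_subring S \<Longrightarrow> a \<in> S \<Longrightarrow> b \<in> S \<Longrightarrow> a + b \<in> S"
  and subring_mult: "is_subring S \<Longrightarrow> a \<in> S \<Longrightarrow> b \<in> S \<Longrightarrow> a * b \<in> S"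
  and subring_uminus: "is_subring S \<Longrightarrow> a \<in> S \<Longrightarrow> - a \<in> S"
  by (simp_all add: is_subring_def)

lemma subring_sum: "is_subring S \<Longrightarrow> (\<And>x. x \<in> A \<Longrightarrow> g x \<in> S) \<Longrightarrow> sum g A \<in> S"
  by (induct A rule: infinite_finite_induct) (auto intro: subring_0 subring_add)

lemma subring_prod: "is_subring S \<Longrightarrow> (\<And>x. x \<in> A \<Longrightarrow> g x \<in> S) \<Longrightarrow> prod g A \<in> S"
  by (induct A rule: infinite_finite_induct) (auto intro: subring_1 subring_mult)

lemma subring_power: "is_subring S \<Longrightarrow> a \<in> S \<Longrightarrow> a ^ n \<in> S"
  by (induct n) (auto intro: subring_1 subring_mult)

lemma subring_coeffwise:
  assumes "is_subring S"
  shows "is_subring {p. \<forall>i. coeff p i \<in> S}"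
  using assms unfolding is_subring_def
  by (auto simp: coeff_mult intro!: subring_sum[OF assms])

section \<open>Ideals, saturations and zero sets\<close>

lemma sat_subset: "sat S J h \<subseteq> S"
  by (auto simp: sat_def)

context
  fixes S :: "'a::comm_ring_1 set"
  assumes S: "is_subring S"
begin

lemma gen_ideal_subset: "G \<subseteq> S \<Longrightarrow> gen_ideal S G \<subseteq> S"
  unfolding gen_ideal_def by (auto intro!: subring_sum[OF S] subring_mult[OF S])

lemma gen_ideal_gen: "g \<in> G \<Longrightarrow> g \<in> gen_ideal S G"
  unfolding gen_ideal_def
  by (intro CollectI exI[of _ "{g}"] exI[of _ "\<lambda>_. 1"]) (simp add: subring_1[OF S])

lemma gen_ideal_0: "0 \<in> gen_ideal S G"
  unfolding gen_ideal_def by (intro CollectI exI[of _ "{}"]) simp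

lemma gen_ideal_add:
  assumes "p \<in> gen_ideal S G" "q \<in> gen_ideal S G"
  shows "p + q \<in> gen_ideal S G"
proof -
  obtain F r where F: "finite F" "F \<subseteq> G" "\<forall>g\<in>F. r g \<in> S" "p = (\<Sum>g\<in>F. r g * g)"
    using assms(1) unfolding gen_ideal_def by blast
  obtain F' r' where F': "finite F'" "F' \<subseteq> G" "\<forall>g\<in>F'. r' g \<in> S" "q = (\<Sum>g\<in>F'. r' g * g)"
    using assms(2) unfolding gen_ideal_def by blast
  define s where "s g = (if g \<in> F then r g else 0) + (if g \<in> F' then r' g else 0)" for g
  have "(\<Sum>g\<in>F \<union> F'. s g * g) =
      (\<Sum>g\<in>F \<union> F'. if g \<in> F then r g * g else 0) + (\<Sum>g\<in>F \<union> F'. if g \<in> F' then r' g * g else 0)"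
    unfolding sum.distrib[symmetric] by (intro sum.cong refl) (simp add: s_def distrib_right)
  also have "\<dots> = p + q"
    using F F' by (simp add: sum.If_cases Int_absorb1 Int_absorb2)
  finally have "p + q = (\<Sum>g\<in>F \<union> F'. s g * g)" ..
  moreover have "\<forall>g\<in>F \<union> F'. s g \<in> S"
    using F(3) F'(3) by (simp add: s_def subring_add[OF S] subring_0[OF S])
  ultimately show ?thesis
    unfolding gen_ideal_def using F F' by (intro CollectI exI[of _ "F \<union> F'"] exI[of _ s]) simp
qed

lemma gen_ideal_mult:
  assumes "s \<in> S" "p \<in> gen_ideal S G"
  shows "s * p \<in> gen_ideal S G"
proof -
  obtain F r where F: "finite F" "F \<subseteq> G" "\<forall>g\<in>F. r g \<in> S" "p = (\<Sum>g\<in>F. r g * g)"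
    using assms(2) unfolding gen_ideal_def by blast
  have "s * p = (\<Sum>g\<in>F. (s * r g) * g)"
    unfolding F(4) sum_distrib_left by (simp add: mult.assoc)
  moreover have "\<forall>g\<in>F. s * r g \<in> S"
    using F(3) subring_mult[OF S assms(1)] by blast
  ultimately show ?thesis
    unfolding gen_ideal_def using F(1,2) by (intro CollectI exI[of _ F] exI[of _ "\<lambda>g. s * r g"]) simp
qed

lemma gen_ideal_sum: "(\<And>x. x \<in> A \<Longrightarrow> g x \<in> gen_ideal S G) \<Longrightarrow> sum g A \<in> gen_ideal S G"
  by (induct A rule: infinite_finite_induct) (auto intro: gen_ideal_add gen_ideal_0)

lemma gen_ideal_diff:
  assumes "p \<in> gen_ideal S G" "q \<in> gen_ideal S G"
  shows "p - q \<in> gen_ideal S G"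
  using gen_ideal_add[OF assms(1) gen_ideal_mult[OF subring_uminus[OF S subring_1[OF S]] assms(2)]]
  by simp

lemma gen_ideal_image:
  assumes "is_ring_hom \<phi>" "\<And>p. p \<in> S \<Longrightarrow> \<phi> p \<in> S" "\<And>g. g \<in> G \<Longrightarrow> \<phi> g \<in> gen_ideal S G'"
  shows "\<phi> ` gen_ideal S G \<subseteq> gen_ideal S G'"
proof
  fix y assume "y \<in> \<phi> ` gen_ideal S G"
  then obtain F r where F: "finite F" "F \<subseteq> G" "\<forall>g\<in>F. r g \<in> S" "y = \<phi> (\<Sum>g\<in>F. r g * g)"
    unfolding gen_ideal_def by blast
  then have "y = (\<Sum>g\<in>F. \<phi> (r g) * \<phi> g)"
    by (simp add: assms(1) ring_hom_sum ring_hom_mult)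
  also have "\<dots> \<in> gen_ideal S G'"
    using F assms by (intro gen_ideal_sum gen_ideal_mult) auto
  finally show "y \<in> gen_ideal S G'" .
qed

lemma sat_image:
  assumes "is_ring_hom \<phi>" "\<And>p. p \<in> S \<Longrightarrow> \<phi> p \<in> S" "\<phi> ` J \<subseteq> J'"
  shows "\<phi> ` sat S J h \<subseteq> sat S J' (\<phi> h)"
proof
  fix y assume "y \<in> \<phi> ` sat S J h"
  then obtain p n where p: "p \<in> S" "h ^ n * p \<in> J" "y = \<phi> p"
    unfolding sat_def by blast
  then have "\<phi> (h ^ n * p) \<in> J'"
    using assms(3) by blast
  then have "\<phi> h ^ n * \<phi> p \<in> J'"
    by (simp add: assms(1) ring_hom_mult ring_hom_power)
  then show "y \<in> sat S J' (\<phi> h)"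
    using p assms(2) unfolding sat_def by blast
qed

lemma sat_cong:
  assumes "h \<in> S" "h' \<in> S" "h - h' \<in> gen_ideal S G"
  shows "sat S (gen_ideal S G) h = sat S (gen_ideal S G) h'"
proof -
  have sub: "sat S (gen_ideal S G) a \<subseteq> sat S (gen_ideal S G) b"
    if "a \<in> S" "b \<in> S" "a - b \<in> gen_ideal S G" for a b
  proof
    fix p assume "p \<in> sat S (gen_ideal S G) a"
    then obtain n where p: "p \<in> S" "a ^ n * p \<in> gen_ideal S G"
      unfolding sat_def by blast
    define c where "c = (\<Sum>i<n. b ^ (n - Suc i) * a ^ i)"
    have "c \<in> S"
      unfolding c_def using that by (intro subring_sum[OF S] subring_mult[OF S] subring_power[OF S])
    have "a ^ n - b ^ n = (a - b) * c"
      unfolding c_def by (rule power_diff_sumr2)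
    have "b ^ n * p = (a ^ n - (a ^ n - b ^ n)) * p"
      by simp
    also have "\<dots> = a ^ n * p - (c * p) * (a - b)"
      unfolding \<open>a ^ n - b ^ n = (a - b) * c\<close> by (simp add: algebra_simps)
    also have "\<dots> \<in> gen_ideal S G"
      using gen_ideal_mult[OF subring_mult[OF S \<open>c \<in> S\<close> p(1)] that(3)] by (rule gen_ideal_diff[OF p(2)])
    finally show "p \<in> sat S (gen_ideal S G) b"
      using p(1) unfolding sat_def by blast
  qed
  have "h' - h \<in> gen_ideal S G"
    using gen_ideal_mult[OF subring_uminus[OF S subring_1[OF S]] assms(3)] by simp
  then show ?thesis
    using sub assms by blast
qed

lemma sat_uminus: "sat S (gen_ideal S G) (- h) = sat S (gen_ideal S G) h"
proof -
  have sign: "(- 1) ^ n \<in> S" for n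
    by (intro subring_power[OF S] subring_uminus[OF S] subring_1[OF S])
  have neg: "(- a) ^ n * p \<in> gen_ideal S G" if "a ^ n * p \<in> gen_ideal S G" for a n p
  proof -
    have "(- a) ^ n * p = (- 1) ^ n * (a ^ n * p)"
      by (simp add: power_minus[of a] mult.assoc)
    then show ?thesis
      using gen_ideal_mult[OF sign that] by (simp only:)
  qed
  have "(- h) ^ n * p \<in> gen_ideal S G \<longleftrightarrow> h ^ n * p \<in> gen_ideal S G" for n p
    using neg[of h n p] neg[of "- h" n p] by (simp only: minus_minus) blast
  then show ?thesis
    unfolding sat_def by (simp only:)
qed

lemma is_prime_ideal_spec_map:
  assumes "is_ring_hom \<phi>" "\<And>p. p \<in> S \<Longrightarrow> \<phi> p \<in> S" "is_prime_ideal S P"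
  shows "is_prime_ideal S (spec_map S \<phi> P)"
  using assms subring_0[OF S] subring_1[OF S] subring_add[OF S] subring_mult[OF S]
  unfolding is_prime_ideal_def spec_map_def
  by (auto simp: ring_hom_0 ring_hom_1 ring_hom_add ring_hom_mult)

lemma spec_map_image_zero_set:
  assumes "is_ring_hom \<phi>" "\<And>p. p \<in> S \<Longrightarrow> \<phi> p \<in> S" "\<And>p. p \<in> S \<Longrightarrow> \<phi> (\<phi> p) = p"
    and "A \<subseteq> S" "B \<subseteq> S" "\<phi> ` A \<subseteq> B" "\<phi> ` B \<subseteq> A"
  shows "spec_map S \<phi> ` zero_set S A = zero_set S B"
proof
  show "spec_map S \<phi> ` zero_set S A \<subseteq> zero_set S B"
    using assms(5,7) is_prime_ideal_spec_map[OF assms(1,2)]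
    unfolding zero_set_def Spec_def spec_map_def by blast
  show "zero_set S B \<subseteq> spec_map S \<phi> ` zero_set S A"
  proof
    fix Q assume Q: "Q \<in> zero_set S B"
    then have "is_prime_ideal S Q"
      by (simp add: zero_set_def Spec_def)
    then have "spec_map S \<phi> (spec_map S \<phi> Q) = Q"
      using assms(2,3) unfolding spec_map_def is_prime_ideal_def by auto
    moreover have "spec_map S \<phi> Q \<in> zero_set S A"
      using Q assms(4,6) is_prime_ideal_spec_map[OF assms(1,2)]
      unfolding zero_set_def Spec_def spec_map_def by blast
    ultimately show "Q \<in> spec_map S \<phi> ` zero_set S A"
      by (metis image_eqI)
  qed
qed

end

section \<open>Substitution homomorphisms of the polynomial ring\<close>

lemma Const_add: "Const (a + b) = Const a + Const b"
  by (simp add: Const_def single_add)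

lemma Const_mult: "Const (a * b) = Const a * Const b"
  by (simp add: Const_def mult_single)

definition subst_mon :: "(var \<Rightarrow> 'k::comm_ring_1 mpoly) \<Rightarrow> (var \<Rightarrow>\<^sub>0 nat) \<Rightarrow> 'k mpoly" where
  "subst_mon \<sigma> mon = (\<Prod>v\<in>Poly_Mapping.keys mon. \<sigma> v ^ Poly_Mapping.lookup mon v)"

lemma subst_eq_sum_subst_mon:
  "subst \<sigma> p = (\<Sum>mon\<in>Poly_Mapping.keys p. Const (Poly_Mapping.lookup p mon) * subst_mon \<sigma> mon)"
  by (simp add: subst_def subst_mon_def)

lemma subst_eq_sum_superset:
  assumes "finite K" "Poly_Mapping.keys p \<subseteq> K"
  shows "subst \<sigma> p = (\<Sum>mon\<in>K. Const (Poly_Mapping.lookup p mon) * subst_mon \<sigma> mon)"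
  unfolding subst_eq_sum_subst_mon
  by (rule sum.mono_neutral_left) (use assms in \<open>auto simp: in_keys_iff Const_def\<close>)

lemma subst_mon_eq_prod_superset:
  assumes "finite K" "Poly_Mapping.keys mon \<subseteq> K"
  shows "subst_mon \<sigma> mon = (\<Prod>v\<in>K. \<sigma> v ^ Poly_Mapping.lookup mon v)"
  unfolding subst_mon_def
  by (rule prod.mono_neutral_left) (use assms in \<open>auto simp: in_keys_iff\<close>)

lemma subst_mon_add: "subst_mon \<sigma> (a + b) = subst_mon \<sigma> a * subst_mon \<sigma> b"
proof -
  let ?K = "Poly_Mapping.keys a \<union> Poly_Mapping.keys b"
  have "subst_mon \<sigma> (a + b) = (\<Prod>v\<in>?K. \<sigma> v ^ Poly_Mapping.lookup (a + b) v)"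
    by (rule subst_mon_eq_prod_superset) (use keys_add[of a b] in auto)
  also have "\<dots> = (\<Prod>v\<in>?K. \<sigma> v ^ Poly_Mapping.lookup a v) * (\<Prod>v\<in>?K. \<sigma> v ^ Poly_Mapping.lookup b v)"
    by (simp add: lookup_add power_add prod.distrib)
  also have "\<dots> = subst_mon \<sigma> a * subst_mon \<sigma> b"
    by (simp add: subst_mon_eq_prod_superset[symmetric])
  finally show ?thesis .
qed

lemma subst_add: "subst \<sigma> (p + q) = subst \<sigma> p + subst \<sigma> q"
proof -
  let ?K = "Poly_Mapping.keys p \<union> Poly_Mapping.keys q"
  have "subst \<sigma> (p + q) = (\<Sum>mon\<in>?K. Const (Poly_Mapping.lookup (p + q) mon) * subst_mon \<sigma> mon)"
    by (rule subst_eq_sum_superset) (use keys_add[of p q] in auto)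
  also have "\<dots> = (\<Sum>mon\<in>?K. Const (Poly_Mapping.lookup p mon) * subst_mon \<sigma> mon)
      + (\<Sum>mon\<in>?K. Const (Poly_Mapping.lookup q mon) * subst_mon \<sigma> mon)"
    by (simp add: lookup_add Const_add distrib_right sum.distrib)
  also have "\<dots> = subst \<sigma> p + subst \<sigma> q"
    by (simp add: subst_eq_sum_superset[symmetric])
  finally show ?thesis .
qed

lemma subst_0 [simp]: "subst \<sigma> 0 = 0"
  by (simp add: subst_def)

lemma subst_sum: "subst \<sigma> (sum g A) = (\<Sum>x\<in>A. subst \<sigma> (g x))"
  by (induct A rule: infinite_finite_induct) (auto simp: subst_add)

lemma subst_single: "subst \<sigma> (Poly_Mapping.single mon c) = Const c * subst_mon \<sigma> mon"
  by (simp add: subst_eq_sum_subst_mon Const_def)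

lemma poly_mapping_sum_singles:
  "p = (\<Sum>a\<in>Poly_Mapping.keys p. Poly_Mapping.single a (Poly_Mapping.lookup p a))"
proof (rule poly_mapping_eqI)
  fix k
  show "Poly_Mapping.lookup p k =
      Poly_Mapping.lookup (\<Sum>a\<in>Poly_Mapping.keys p. Poly_Mapping.single a (Poly_Mapping.lookup p a)) k"
    by (cases "k \<in> Poly_Mapping.keys p") (auto simp: lookup_sum lookup_single when_def in_keys_iff)
qed

lemma subst_mult: "subst \<sigma> (p * q) = subst \<sigma> p * subst \<sigma> q"
proof -
  let ?P = "Poly_Mapping.keys p" and ?Q = "Poly_Mapping.keys q"
  let ?c = "Poly_Mapping.lookup p" and ?d = "Poly_Mapping.lookup q"
  have "p * q = (\<Sum>a\<in>?P. Poly_Mapping.single a (?c a)) * (\<Sum>b\<in>?Q. Poly_Mapping.single b (?d b))"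
    by (subst poly_mapping_sum_singles[of p], subst poly_mapping_sum_singles[of q]) rule
  also have "\<dots> = (\<Sum>a\<in>?P. \<Sum>b\<in>?Q. Poly_Mapping.single (a + b) (?c a * ?d b))"
    by (simp add: sum_distrib_left sum_distrib_right mult_single) (rule sum.swap)
  finally have "subst \<sigma> (p * q) =
      (\<Sum>a\<in>?P. \<Sum>b\<in>?Q. (Const (?c a) * subst_mon \<sigma> a) * (Const (?d b) * subst_mon \<sigma> b))"
    by (simp add: subst_sum subst_single Const_mult subst_mon_add ac_simps)
  also have "\<dots> = subst \<sigma> p * subst \<sigma> q"
    by (simp add: subst_eq_sum_subst_mon sum_distrib_left sum_distrib_right) (rule sum.swap)
  finally show ?thesis .
qed

lemma is_ring_hom_subst: "is_ring_hom (subst \<sigma>)"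
proof -
  have "subst \<sigma> 1 = 1"
    using subst_single[of \<sigma> 0 1] by (simp add: Const_def subst_mon_def)
  then show ?thesis
    by (simp add: is_ring_hom_def subst_add subst_mult)
qed

lemma subst_Var [simp]: "subst \<sigma> (Var v) = \<sigma> v"
  by (simp add: Var_def subst_single subst_mon_def Const_def)

lemma subst_Const [simp]: "subst \<sigma> (Const c) = Const c"
  by (simp add: Const_def subst_single subst_mon_def)

lemma ring_hom_subst_eq_subst:
  assumes "is_ring_hom g" "\<And>c. g (Const c) = Const c"
  shows "g (subst \<sigma> p) = subst (\<lambda>v. g (\<sigma> v)) p"
  by (simp add: subst_def assms ring_hom_sum ring_hom_mult ring_hom_prod ring_hom_power)

lemma subst_Var_id: "subst Var p = p"
proof -
  have Var_power: "Var v ^ n = Poly_Mapping.single (Poly_Mapping.single v n) (1::'a)" for v n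
    by (induct n) (simp_all add: Var_def mult_single single_add[symmetric] add.commute)
  have prod_single: "(\<Prod>v\<in>A. Poly_Mapping.single (f v) (1::'a)) = Poly_Mapping.single (sum f A) 1"
    for A :: "var set" and f :: "var \<Rightarrow> var \<Rightarrow>\<^sub>0 nat"
    by (induct A rule: infinite_finite_induct) (simp_all add: mult_single)
  have "subst_mon Var a = Poly_Mapping.single a (1::'a)" for a
    unfolding subst_mon_def Var_power prod_single
    using poly_mapping_sum_singles[of a] by simp
  then have "subst Var (Poly_Mapping.single a c) = Poly_Mapping.single a c" for a and c :: 'a
    by (simp add: subst_single Const_def mult_single)
  then show ?thesis
    by (subst (1 2) poly_mapping_sum_singles[of p]) (simp add: subst_sum)
qed

lemma is_subring_Rm: "is_subring (Rm m)"
  unfolding is_subring_def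
proof (intro conjI ballI)
  show "0 \<in> Rm m" "1 \<in> Rm m"
    by (simp_all add: Rm_def)
  fix a b :: "'a mpoly"
  assume a: "a \<in> Rm m" and b: "b \<in> Rm m"
  show "a + b \<in> Rm m"
    using a b keys_add[of a b] unfolding Rm_def by blast
  show "- a \<in> Rm m"
    using a unfolding Rm_def by simp
  show "a * b \<in> Rm m"
    unfolding Rm_def
  proof (intro CollectI ballI)
    fix mon v
    assume "mon \<in> Poly_Mapping.keys (a * b)" and v: "v \<in> Poly_Mapping.keys mon"
    then obtain s t where st: "s \<in> Poly_Mapping.keys a" "t \<in> Poly_Mapping.keys b" "mon = s + t"
      using keys_mult[of a b] by blast
    then have "v \<in> Poly_Mapping.keys s \<union> Poly_Mapping.keys t"
      using keys_add[of s t] v by blast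
    then show "vidx v \<le> m"
      using a b st(1,2) unfolding Rm_def by blast
  qed
qed

lemma Var_in_Rm: "vidx v \<le> m \<Longrightarrow> Var v \<in> Rm m"
  by (simp add: Rm_def Var_def)

lemma subst_in_Rm:
  assumes "\<And>v. vidx v \<le> m \<Longrightarrow> \<sigma> v \<in> Rm m" "p \<in> Rm m"
  shows "subst \<sigma> p \<in> Rm m"
proof -
  have "Const c \<in> Rm m" for c :: 'a
    by (simp add: Rm_def Const_def)
  moreover have "vidx v \<le> m" if "mon \<in> Poly_Mapping.keys p" "v \<in> Poly_Mapping.keys mon" for mon v
    using assms(2) that unfolding Rm_def by blast
  ultimately show ?thesis
    unfolding subst_def
    by (intro subring_sum[OF is_subring_Rm] subring_mult[OF is_subring_Rm]
        subring_prod[OF is_subring_Rm] subring_power[OF is_subring_Rm] assms(1)) auto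
qed

lemma fj_in_Rm: "fj m j \<in> Rm m"
proof -
  let ?P = "{p. \<forall>i. coeff p i \<in> Rm m}"
  have P: "is_subring ?P"
    by (rule subring_coeffwise[OF is_subring_Rm])
  have arc: "arc c m \<in> ?P" if "\<And>i. vidx (c i) = i" for c
    unfolding arc_def using that
    by (auto simp: coeff_sum coeff_monom intro!: subring_sum[OF is_subring_Rm] Var_in_Rm
        subring_0[OF is_subring_Rm])
  have "arc X m \<in> ?P" "arc Y m \<in> ?P" "arc Z m \<in> ?P"
    by (rule arc; simp)+
  then have "fpoly (arc X m) (arc Y m) (arc Z m) \<in> ?P"
    unfolding fpoly_def power2_eq_square by (intro subring_add[OF P] subring_mult[OF P])
  then show ?thesis
    unfolding fj_def by blast
qed

lemma map_poly_arc:
  "is_ring_hom f \<Longrightarrow> map_poly f (arc c m) = (\<Sum>i\<le>m. monom (f (Var (c i))) i)"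
  unfolding arc_def by (simp add: ring_hom_map_poly ring_hom_sum map_poly_monom ring_hom_0)

lemma ring_hom_fj:
  assumes "is_ring_hom f"
  shows "f (fj m j) =
    coeff (fpoly (map_poly f (arc X m)) (map_poly f (arc Y m)) (map_poly f (arc Z m))) j"
proof -
  have "map_poly f (fpoly (arc X m) (arc Y m) (arc Z m)) =
      fpoly (map_poly f (arc X m)) (map_poly f (arc Y m)) (map_poly f (arc Z m))"
    using ring_hom_map_poly[OF assms]
    unfolding fpoly_def by (simp add: ring_hom_add ring_hom_mult ring_hom_power)
  then show ?thesis
    unfolding fj_def by (metis assms coeff_map_poly ring_hom_0)
qed

lemma fpoly_swap: "fpoly a c b = fpoly a b c"
  unfolding fpoly_def power2_eq_square by (simp add: ac_simps)

lemma fpoly_shift: "fpoly a b (b + c) = fpoly a b c + 2 * (b ^ 3 + b ^ 2 * c)"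
  unfolding fpoly_def power2_eq_square power3_eq_cube by (simp add: algebra_simps)

lemma Im0_subset_Rm: "2 \<le> m \<Longrightarrow> Im0 m \<subseteq> Rm m"
  unfolding Im0_def using fj_in_Rm
  by (intro gen_ideal_subset[OF is_subring_Rm]) (auto simp: Fm_def Var_in_Rm)

lemmas gen_in_Rm_ideal = gen_ideal_gen[OF is_subring_Rm]

lemma gen_sum_in_Rm_ideal: "a \<in> G \<Longrightarrow> b \<in> G \<Longrightarrow> a + b \<in> gen_ideal (Rm m) G"
  by (intro gen_ideal_add[OF is_subring_Rm] gen_in_Rm_ideal)

lemma jet_ideal_image:
  fixes \<phi> :: "'k::comm_ring_1 mpoly \<Rightarrow> 'k mpoly"
  assumes "is_ring_hom \<phi>" "\<And>p. p \<in> Rm m \<Longrightarrow> \<phi> p \<in> Rm m" "\<And>j. \<phi> (fj m j) = fj m j"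
    and "\<And>g. g \<in> G \<Longrightarrow> \<phi> g \<in> gen_ideal (Rm m) (G' \<union> Fm m)"
  shows "\<phi> ` gen_ideal (Rm m) (G \<union> Fm m) \<subseteq> gen_ideal (Rm m) (G' \<union> Fm m)"
  by (rule gen_ideal_image[OF is_subring_Rm])
    (use assms in \<open>auto simp: Fm_def intro: gen_in_Rm_ideal\<close>)

section \<open>The automorphism \<open>\<phi>1\<close>\<close>

lemma \<phi>1_Var [simp]:
  "\<phi>1 (Var (X i)) = Var (X i)" "\<phi>1 (Var (Y i)) = Var (Z i)" "\<phi>1 (Var (Z i)) = Var (Y i)"
  by (simp_all add: \<phi>1_def)

lemma is_ring_hom_\<phi>1: "is_ring_hom \<phi>1"
  by (simp add: \<phi>1_def is_ring_hom_subst)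

lemma \<phi>1_in_Rm: "p \<in> Rm m \<Longrightarrow> \<phi>1 p \<in> Rm m"
  unfolding \<phi>1_def
proof (rule subst_in_Rm)
  fix v :: var
  assume "vidx v \<le> m"
  then show "\<sigma>1 v \<in> Rm m"
    by (cases v) (auto intro: Var_in_Rm)
qed

lemma \<phi>1_\<phi>1: "\<phi>1 (\<phi>1 p) = (p :: 'k::comm_ring_1 mpoly)"
proof -
  have "\<phi>1 (\<phi>1 p) = subst (\<lambda>v. \<phi>1 (\<sigma>1 v)) p"
    unfolding \<phi>1_def by (rule ring_hom_subst_eq_subst) (simp_all add: is_ring_hom_subst)
  also have "(\<lambda>v. \<phi>1 (\<sigma>1 v)) = (Var :: var \<Rightarrow> 'k mpoly)"
  proof
    fix v
    show "\<phi>1 (\<sigma>1 v) = (Var v :: 'k mpoly)"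
      by (cases v) simp_all
  qed
  finally show ?thesis
    by (simp add: subst_Var_id)
qed

lemma \<phi>1_fj: "\<phi>1 (fj m j) = (fj m j :: 'k::comm_ring_1 mpoly)"
proof -
  have "map_poly \<phi>1 (arc X m) = (arc X m :: 'k mpoly poly)"
    "map_poly \<phi>1 (arc Y m) = (arc Z m :: 'k mpoly poly)"
    "map_poly \<phi>1 (arc Z m) = (arc Y m :: 'k mpoly poly)"
    unfolding map_poly_arc[OF is_ring_hom_\<phi>1] by (simp_all add: arc_def)
  then show ?thesis
    unfolding ring_hom_fj[OF is_ring_hom_\<phi>1] by (simp add: fpoly_swap[of "arc X m"] fj_def)
qed

lemma \<phi>1_sat:
  "\<phi>1 ` J \<subseteq> J' \<Longrightarrow> \<phi>1 h = h' \<Longrightarrow> \<phi>1 ` sat (Rm m) J h \<subseteq> sat (Rm m) J' h'"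
  using sat_image[OF is_subring_Rm is_ring_hom_\<phi>1 \<phi>1_in_Rm] by blast

lemma \<phi>1_Im0: "\<phi>1 ` Im0 m \<subseteq> Im0 m"
  unfolding Im0_def
  by (rule jet_ideal_image[OF is_ring_hom_\<phi>1 \<phi>1_in_Rm \<phi>1_fj]) (auto intro: gen_in_Rm_ideal)

lemma \<phi>1_Jm1: "\<phi>1 ` Jm1 m \<subseteq> Jm2 m"
  and \<phi>1_Jm2: "\<phi>1 ` Jm2 m \<subseteq> Jm1 m"
  and \<phi>1_Jm3: "\<phi>1 ` Jm3 m \<subseteq> Jm3 m"
  unfolding Jm1_def Jm2_def Jm3_def
  by (rule jet_ideal_image[OF is_ring_hom_\<phi>1 \<phi>1_in_Rm \<phi>1_fj];
      auto simp: ring_hom_add[OF is_ring_hom_\<phi>1] add.commute intro: gen_in_Rm_ideal)+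

lemma \<phi>1_Im1: "\<phi>1 ` Im1 m \<subseteq> Im2 m"
  unfolding Im1_def Im2_def by (rule \<phi>1_sat[OF \<phi>1_Jm1]) simp

lemma \<phi>1_Im2: "\<phi>1 ` Im2 m \<subseteq> Im1 m"
  unfolding Im1_def Im2_def by (rule \<phi>1_sat[OF \<phi>1_Jm2]) simp

lemma \<phi>1_Im3:
  assumes "1 \<le> m"
  shows "\<phi>1 ` Im3 m \<subseteq> Im3 m"
proof -
  have "\<phi>1 ` Im3 m \<subseteq> sat (Rm m) (Jm3 m) (Var (Z 1))"
    unfolding Im3_def by (rule \<phi>1_sat[OF \<phi>1_Jm3]) simp
  also have "\<dots> = sat (Rm m) (Jm3 m) (- Var (Y 1))"
  proof -
    have "Var (Z 1) - (- Var (Y 1)) \<in> Jm3 m"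
      unfolding Jm3_def by (simp add: add.commute gen_in_Rm_ideal)
    then show ?thesis
      unfolding Jm3_def using assms
      by (intro sat_cong[OF is_subring_Rm]) (simp_all add: Var_in_Rm subring_uminus[OF is_subring_Rm])
  qed
  also have "\<dots> = Im3 m"
    unfolding Im3_def Jm3_def by (rule sat_uminus[OF is_subring_Rm])
  finally show ?thesis .
qed

section \<open>The automorphism \<open>\<phi>2\<close> in characteristic 2\<close>

lemma two_mpoly_eq_0:
  assumes "CHAR('k::comm_ring_1) = 2"
  shows "(2 :: 'k mpoly) = 0"
proof -
  have "(2 :: 'k) = 0"
    using of_nat_CHAR[where 'a = 'k] assms by simp
  then show ?thesis
    by (metis single_numeral single_zero)
qed

lemma two_mpoly_poly_eq_0:
  assumes "CHAR('k::comm_ring_1) = 2"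
  shows "(2 :: 'k mpoly poly) = 0"
  using of_nat_poly[of 2, where 'a = "'k mpoly"] two_mpoly_eq_0[OF assms] by simp

lemma \<phi>2_Var [simp]:
  "\<phi>2 (Var (X i)) = Var (X i)" "\<phi>2 (Var (Y i)) = Var (Y i)"
  "\<phi>2 (Var (Z i)) = Var (Y i) + Var (Z i)"
  by (simp_all add: \<phi>2_def)

lemma is_ring_hom_\<phi>2: "is_ring_hom \<phi>2"
  by (simp add: \<phi>2_def is_ring_hom_subst)

lemma \<phi>2_in_Rm: "p \<in> Rm m \<Longrightarrow> \<phi>2 p \<in> Rm m"
  unfolding \<phi>2_def
proof (rule subst_in_Rm)
  fix v :: var
  assume "vidx v \<le> m"
  then show "\<sigma>2 v \<in> Rm m"
    by (cases v) (auto intro!: Var_in_Rm subring_add[OF is_subring_Rm])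
qed

lemma \<phi>2_sat:
  "\<phi>2 ` J \<subseteq> J' \<Longrightarrow> \<phi>2 h = h' \<Longrightarrow> \<phi>2 ` sat (Rm m) J h \<subseteq> sat (Rm m) J' h'"
  using sat_image[OF is_subring_Rm is_ring_hom_\<phi>2 \<phi>2_in_Rm] by blast

context
  assumes char2: "CHAR('k::comm_ring_1) = 2"
begin

lemma \<phi>2_Y_plus_Z: "\<phi>2 (Var (Y i) + Var (Z i)) = (Var (Z i) :: 'k mpoly)"
  using two_mpoly_eq_0[OF char2]
  by (simp add: ring_hom_add[OF is_ring_hom_\<phi>2] add.assoc[symmetric] mult_2[symmetric])

lemma \<phi>2_\<phi>2: "\<phi>2 (\<phi>2 p) = (p :: 'k mpoly)"
proof -
  have "\<phi>2 (\<phi>2 p) = subst (\<lambda>v. \<phi>2 (\<sigma>2 v)) p"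
    unfolding \<phi>2_def by (rule ring_hom_subst_eq_subst) (simp_all add: is_ring_hom_subst)
  also have "(\<lambda>v. \<phi>2 (\<sigma>2 v)) = (Var :: var \<Rightarrow> 'k mpoly)"
  proof
    fix v
    show "\<phi>2 (\<sigma>2 v) = (Var v :: 'k mpoly)"
      by (cases v) (simp_all add: \<phi>2_Y_plus_Z)
  qed
  finally show ?thesis
    by (simp add: subst_Var_id)
qed

lemma \<phi>2_fj: "\<phi>2 (fj m j) = (fj m j :: 'k mpoly)"
proof -
  have "map_poly \<phi>2 (arc X m) = (arc X m :: 'k mpoly poly)"
    "map_poly \<phi>2 (arc Y m) = (arc Y m :: 'k mpoly poly)"
    "map_poly \<phi>2 (arc Z m) = (arc Y m + arc Z m :: 'k mpoly poly)"
    unfolding map_poly_arc[OF is_ring_hom_\<phi>2]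
    by (simp_all add: arc_def add_monom[symmetric] sum.distrib)
  then show ?thesis
    unfolding ring_hom_fj[OF is_ring_hom_\<phi>2]
    by (simp add: fpoly_shift two_mpoly_poly_eq_0[OF char2] fj_def)
qed

lemma \<phi>2_Im0: "\<phi>2 ` Im0 m \<subseteq> (Im0 m :: 'k mpoly set)"
  unfolding Im0_def
  by (rule jet_ideal_image[OF is_ring_hom_\<phi>2 \<phi>2_in_Rm \<phi>2_fj])
    (auto intro: gen_in_Rm_ideal gen_sum_in_Rm_ideal)

lemma \<phi>2_Jm1: "\<phi>2 ` Jm1 m \<subseteq> (Jm1 m :: 'k mpoly set)"
  and \<phi>2_Jm2: "\<phi>2 ` Jm2 m \<subseteq> (Jm3 m :: 'k mpoly set)"
  and \<phi>2_Jm3: "\<phi>2 ` Jm3 m \<subseteq> (Jm2 m :: 'k mpoly set)"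
  unfolding Jm1_def Jm2_def Jm3_def
  by (rule jet_ideal_image[OF is_ring_hom_\<phi>2 \<phi>2_in_Rm \<phi>2_fj];
      auto simp: \<phi>2_Y_plus_Z intro: gen_in_Rm_ideal gen_sum_in_Rm_ideal)+

lemma \<phi>2_Im1:
  assumes "1 \<le> m"
  shows "\<phi>2 ` Im1 m \<subseteq> (Im1 m :: 'k mpoly set)"
proof -
  have "\<phi>2 ` Im1 m \<subseteq> sat (Rm m) (Jm1 m) (Var (Y 1) + Var (Z 1) :: 'k mpoly)"
    unfolding Im1_def by (rule \<phi>2_sat[OF \<phi>2_Jm1]) simp
  also have "\<dots> = Im1 m"
  proof -
    have "(Var (Y 1) + Var (Z 1)) - Var (Z 1) \<in> (Jm1 m :: 'k mpoly set)"
      unfolding Jm1_def by (simp add: gen_in_Rm_ideal)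
    then show ?thesis
      unfolding Im1_def Jm1_def using assms
      by (intro sat_cong[OF is_subring_Rm]) (simp_all add: Var_in_Rm subring_add[OF is_subring_Rm])
  qed
  finally show ?thesis .
qed

lemma \<phi>2_Im2: "\<phi>2 ` Im2 m \<subseteq> (Im3 m :: 'k mpoly set)"
  unfolding Im2_def Im3_def by (rule \<phi>2_sat[OF \<phi>2_Jm2]) simp

lemma \<phi>2_Im3: "\<phi>2 ` Im3 m \<subseteq> (Im2 m :: 'k mpoly set)"
  unfolding Im2_def Im3_def by (rule \<phi>2_sat[OF \<phi>2_Jm3]) simp

end

lemma \<psi>1_image_zero_set:
  assumes "A \<subseteq> Rm m" "B \<subseteq> Rm m" "\<phi>1 ` A \<subseteq> B" "\<phi>1 ` B \<subseteq> A"
  shows "\<psi>1 m ` zero_set (Rm m) A = zero_set (Rm m) B"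
  unfolding \<psi>1_def
  by (rule spec_map_image_zero_set[OF is_subring_Rm is_ring_hom_\<phi>1 \<phi>1_in_Rm \<phi>1_\<phi>1 assms])

lemma \<psi>2_image_zero_set:
  assumes "CHAR('k::comm_ring_1) = 2"
    and "A \<subseteq> Rm m" "B \<subseteq> Rm m" "\<phi>2 ` A \<subseteq> B" "\<phi>2 ` B \<subseteq> (A :: 'k mpoly set)"
  shows "\<psi>2 m ` zero_set (Rm m) A = zero_set (Rm m) B"
  unfolding \<psi>2_def
  by (rule spec_map_image_zero_set[OF is_subring_Rm is_ring_hom_\<phi>2 \<phi>2_in_Rm \<phi>2_\<phi>2[OF assms(1)] assms(2-)])

theorem lemma3p5:
  fixes m :: nat
  assumes "CHAR('k::alg_closed_field) = 2"
    and "m \<ge> 5"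
  shows "\<psi>1 m ` (Zm m 0 :: 'k mpoly set set) = Zm m 0 \<and>
         \<psi>1 m ` (Zm m 1 :: 'k mpoly set set) = Zm m 2 \<and>
         \<psi>1 m ` (Zm m 2 :: 'k mpoly set set) = Zm m 1 \<and>
         \<psi>1 m ` (Zm m 3 :: 'k mpoly set set) = Zm m 3 \<and>
         \<psi>2 m ` (Zm m 0 :: 'k mpoly set set) = Zm m 0 \<and>
         \<psi>2 m ` (Zm m 1 :: 'k mpoly set set) = Zm m 1 \<and>
         \<psi>2 m ` (Zm m 2 :: 'k mpoly set set) = Zm m 3 \<and>
         \<psi>2 m ` (Zm m 3 :: 'k mpoly set set) = Zm m 2"
proof -
  have "1 \<le> m" "2 \<le> m"
    using assms(2) by simp_all
  have I0: "Im0 m \<subseteq> (Rm m :: 'k mpoly set)"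
    using Im0_subset_Rm[OF \<open>2 \<le> m\<close>] .
  have I: "Im1 m \<subseteq> (Rm m :: 'k mpoly set)" "Im2 m \<subseteq> (Rm m :: 'k mpoly set)"
    "Im3 m \<subseteq> (Rm m :: 'k mpoly set)"
    by (simp_all add: Im1_def Im2_def Im3_def sat_subset)
  note V1 = \<psi>1_image_zero_set and V2 = \<psi>2_image_zero_set[OF assms(1)]
  show ?thesis
    unfolding Zm_def
    using V1[OF I0 I0 \<phi>1_Im0 \<phi>1_Im0] V1[OF I(1,2) \<phi>1_Im1 \<phi>1_Im2] V1[OF I(2,1) \<phi>1_Im2 \<phi>1_Im1]
      V1[OF I(3,3) \<phi>1_Im3[OF \<open>1 \<le> m\<close>] \<phi>1_Im3[OF \<open>1 \<le> m\<close>]]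
      V2[OF I0 I0 \<phi>2_Im0[OF assms(1)] \<phi>2_Im0[OF assms(1)]]
      V2[OF I(1,1) \<phi>2_Im1[OF assms(1) \<open>1 \<le> m\<close>] \<phi>2_Im1[OF assms(1) \<open>1 \<le> m\<close>]]
      V2[OF I(2,3) \<phi>2_Im2[OF assms(1)] \<phi>2_Im3[OF assms(1)]]
      V2[OF I(3,2) \<phi>2_Im3[OF assms(1)] \<phi>2_Im2[OF assms(1)]]
    by simp
qed

end
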